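(* Let $(h_n)_{n\ge1}$ be a sequence taking values in a finite set of maps of the form $h(z)=az+b$ with $a>0$ and $\operatorname{Re}(b)>0$; write $h_n(z)=a_nz+b_n$, and let $H_n=h_1\cdots h_n$. Then $(H_n)$ is of limit-disc type if and only if $\sum_{n=1}^\infty a_1a_2\cdots a_n<+\infty$. Furthermore, if $(H_n)$ is of limit-disc type and converges ideally to a point $q$, then $q\neq\infty$.
   Context: $\mathbb{K}$ is the open right half-plane $\{\operatorname{Re}z>0\}$; each $h_n$ maps $\mathbb{K}$ strictly inside itself. $(H_n)$ is of limit-disc type if $\bigcap_n H_n(\overline{\mathbb{K}})$ (closures in $\overline{\mathbb{C}}$) is a disc (of positive chordal radius), rather than a single point. Möbius maps act on $\mathbb{H}^3=\{(x,y,t):t>0\}$ via Poincaré extension, $j=(0,0,1)$; $(H_n)$ converges ideally to $q\in\overline{\mathbb{C}}$ if $H_n(j)\to q$ in the chordal metric. *)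

theory Defs
  imports "HOL-Analysis.Analysis"
begin

text \<open>Extended complex plane: complex option, None = infinity.
  Closed upper half-space with boundary: points (z,t), t >= 0, plus infinity:
  (complex * real) option.  Chordal metric on R^3 u {infinity}.\<close>

fun chordal :: "(complex \<times> real) option \<Rightarrow> (complex \<times> real) option \<Rightarrow> real" where
  "chordal (Some (z, s)) (Some (w, t)) =
     2 * sqrt ((cmod (z - w))\<^sup>2 + (s - t)\<^sup>2) / sqrt ((1 + (cmod z)\<^sup>2 + s\<^sup>2) * (1 + (cmod w)\<^sup>2 + t\<^sup>2))"
| "chordal (Some (z, s)) None = 2 / sqrt (1 + (cmod z)\<^sup>2 + s\<^sup>2)"
| "chordal None (Some (w, t)) = 2 / sqrt (1 + (cmod w)\<^sup>2 + t\<^sup>2)"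
| "chordal None None = 0"

definition emb_hat :: "complex option \<Rightarrow> (complex \<times> real) option" where
  "emb_hat = map_option (\<lambda>z. (z, 0))"

definition chordal_hat :: "complex option \<Rightarrow> complex option \<Rightarrow> real" where
  "chordal_hat p q = chordal (emb_hat p) (emb_hat q)"

definition aff_hat :: "real \<times> complex \<Rightarrow> complex option \<Rightarrow> complex option" where
  "aff_hat h = map_option (\<lambda>z. of_real (fst h) * z + snd h)"

definition poincare :: "real \<times> complex \<Rightarrow> complex \<times> real \<Rightarrow> complex \<times> real" where
  "poincare h p = (of_real (fst h) * fst p + snd h, \<bar>fst h\<bar> * snd p)"

primrec comp_upto :: "(nat \<Rightarrow> 'a \<Rightarrow> 'a) \<Rightarrow> nat \<Rightarrow> 'a \<Rightarrow> 'a" where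
  "comp_upto f 0 = id"
| "comp_upto f (Suc n) = comp_upto f n \<circ> f (Suc n)"

definition Kbar :: "complex option set" where
  "Kbar = insert None (Some ` {z. Re z \<ge> 0})"

definition limit_disc_type :: "(nat \<Rightarrow> real \<times> complex) \<Rightarrow> bool" where
  "limit_disc_type h \<longleftrightarrow>
     (\<exists>c r. r > 0 \<and>
        (\<Inter>n\<in>{1..}. comp_upto (\<lambda>k. aff_hat (h k)) n ` Kbar) = {w. chordal_hat c w \<le> r})"

definition converges_ideally :: "(nat \<Rightarrow> real \<times> complex) \<Rightarrow> complex option \<Rightarrow> bool" where
  "converges_ideally h q \<longleftrightarrow>
     (\<lambda>n. chordal (Some (comp_upto (\<lambda>k. poincare (h k)) n (0, 1))) (emb_hat q)) \<longlonglongrightarrow> 0"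

end

theory Submission
  imports Defs
begin

text \<open>The composition \<open>H\<^sub>n = h\<^sub>1 \<circ> \<dots> \<circ> h\<^sub>n\<close> is again affine, \<open>H\<^sub>n z = A\<^sub>n z + B\<^sub>n\<close> with
  \<open>A\<^sub>n = a\<^sub>1 \<cdots> a\<^sub>n\<close> and \<open>B\<^sub>n = (\<Sum>j<n. A\<^sub>j b\<^sub>j\<^sub>+\<^sub>1)\<close>, so \<open>H\<^sub>n\<close> maps the closed right
  half-plane onto the half-plane \<open>Re w \<ge> Re B\<^sub>n\<close> (together with \<open>\<infinity>\<close>). The nested
  intersection is therefore a half-plane, i.e. a chordal disc, exactly when \<open>Re B\<^sub>n\<close> stays
  bounded. Since the \<open>b\<^sub>k\<close> range over a finite subset of the open right half-plane, both
  \<open>Re B\<^sub>n\<close> and \<open>|B\<^sub>n|\<close> are comparable to \<open>\<Sum>j<n. A\<^sub>j\<close>, which gives the criterion. In the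
  limit-disc case the Poincare extension maps \<open>j\<close> to the point \<open>(B\<^sub>n, A\<^sub>n)\<close>, which then stays
  bounded and so cannot tend to \<open>\<infinity>\<close>.\<close>

definition comp_scale :: "(nat \<Rightarrow> real \<times> complex) \<Rightarrow> nat \<Rightarrow> real" where
  "comp_scale h n = (\<Prod>k=1..n. fst (h k))"

definition comp_shift :: "(nat \<Rightarrow> real \<times> complex) \<Rightarrow> nat \<Rightarrow> complex" where
  "comp_shift h n = (\<Sum>j<n. of_real (comp_scale h j) * snd (h (Suc j)))"

lemma comp_scale_0 [simp]: "comp_scale h 0 = 1"
  by (simp add: comp_scale_def)

lemma comp_scale_Suc: "comp_scale h (Suc n) = comp_scale h n * fst (h (Suc n))"
  by (simp add: comp_scale_def)

lemma comp_shift_Suc: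
  "comp_shift h (Suc n) = comp_shift h n + of_real (comp_scale h n) * snd (h (Suc n))"
  by (simp add: comp_shift_def)

lemma comp_scale_pos:
  assumes "\<forall>k\<ge>1. fst (h k) > 0"
  shows "comp_scale h n > 0"
  unfolding comp_scale_def using assms by (intro prod_pos) auto

lemma comp_upto_aff_hat:
  "comp_upto (\<lambda>k. aff_hat (h k)) n = aff_hat (comp_scale h n, comp_shift h n)"
proof (induction n)
  case 0
  show ?case by (simp add: aff_hat_def comp_shift_def option.map_ident)
next
  case (Suc n)
  show ?case
  proof
    fix x
    show "comp_upto (\<lambda>k. aff_hat (h k)) (Suc n) x = aff_hat (comp_scale h (Suc n), comp_shift h (Suc n)) x"
      using Suc by (cases x) (simp_all add: aff_hat_def comp_scale_Suc comp_shift_Suc algebra_simps)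
  qed
qed

lemma comp_upto_poincare:
  "comp_upto (\<lambda>k. poincare (h k)) n = poincare (comp_scale h n, comp_shift h n)"
proof (induction n)
  case 0
  show ?case by (auto simp: poincare_def comp_shift_def)
next
  case (Suc n)
  show ?case
    by (rule ext) (simp add: Suc.IH, simp add: poincare_def comp_scale_Suc comp_shift_Suc algebra_simps abs_mult)
qed

lemma aff_hat_image_Kbar:
  assumes "A > 0"
  shows "aff_hat (A, B) ` Kbar = insert None (Some ` {w. Re B \<le> Re w})"
proof -
  have "Some w \<in> aff_hat (A, B) ` Kbar" if "Re B \<le> Re w" for w
  proof (rule image_eqI)
    show "Some ((w - B) / of_real A) \<in> Kbar"
      using that assms by (simp add: Kbar_def Re_divide_of_real)
    show "Some w = aff_hat (A, B) (Some ((w - B) / of_real A))"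
      using assms by (simp add: aff_hat_def)
  qed
  moreover have "None \<in> aff_hat (A, B) ` Kbar"
    by (rule image_eqI[of _ _ None]) (simp_all add: Kbar_def aff_hat_def)
  moreover have "aff_hat (A, B) ` Kbar \<subseteq> insert None (Some ` {w. Re B \<le> Re w})"
    using assms by (auto simp: Kbar_def aff_hat_def)
  ultimately show ?thesis by blast
qed

text \<open>The closed half-plane \<open>Re w \<ge> \<beta>\<close> is the chordal disc centred at the real point \<open>\<gamma>\<close>
  whose boundary circle passes through \<open>\<infinity>\<close>; that condition, \<open>|\<gamma> - w|\<^sup>2 = 1 + |w|\<^sup>2\<close> on
  \<open>Re w = \<beta>\<close>, is the quadratic \<open>\<gamma>\<^sup>2 - 2\<beta>\<gamma> - 1 = 0\<close>.\<close>

lemma halfplane_eq_chordal_disc: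
  fixes \<beta> :: real
  defines "\<gamma> \<equiv> \<beta> + sqrt (\<beta>\<^sup>2 + 1)"
  shows "insert None (Some ` {w. \<beta> \<le> Re w})
       = {w. chordal_hat (Some (of_real \<gamma>)) w \<le> 2 / sqrt (1 + \<gamma>\<^sup>2)}"
proof -
  have "sqrt (\<beta>\<^sup>2 + 1) > \<bar>\<beta>\<bar>"
    by (simp add: real_less_rsqrt)
  then have \<gamma>_pos: "\<gamma> > 0"
    unfolding \<gamma>_def by linarith
  have \<gamma>_root: "\<gamma>\<^sup>2 - 2 * \<beta> * \<gamma> - 1 = 0"
    unfolding \<gamma>_def by (simp add: power2_eq_square algebra_simps)
  have finite_points:
    "chordal_hat (Some (of_real \<gamma>)) (Some w) \<le> 2 / sqrt (1 + \<gamma>\<^sup>2) \<longleftrightarrow> \<beta> \<le> Re w" for w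
  proof -
    have "chordal_hat (Some (of_real \<gamma>)) (Some w)
        = 2 * cmod (of_real \<gamma> - w) / (sqrt (1 + \<gamma>\<^sup>2) * sqrt (1 + (cmod w)\<^sup>2))"
      by (simp add: chordal_hat_def emb_hat_def real_sqrt_mult)
    also have "\<dots> \<le> 2 / sqrt (1 + \<gamma>\<^sup>2) \<longleftrightarrow> cmod (of_real \<gamma> - w) \<le> sqrt (1 + (cmod w)\<^sup>2)"
      using add_pos_nonneg[of 1 "\<gamma>\<^sup>2"] add_pos_nonneg[of 1 "(cmod w)\<^sup>2"]
      by (simp add: divide_simps mult.commute mult.left_commute)
    also have "\<dots> \<longleftrightarrow> (cmod (of_real \<gamma> - w))\<^sup>2 \<le> 1 + (cmod w)\<^sup>2"
      using real_le_rsqrt[of "cmod (of_real \<gamma> - w)"] sqrt_ge_absD[of "cmod (of_real \<gamma> - w)"] by auto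
    also have "\<dots> \<longleftrightarrow> 2 * \<gamma> * \<beta> \<le> 2 * \<gamma> * Re w"
      using \<gamma>_root unfolding cmod_power2[of "of_real \<gamma> - w"] cmod_power2[of w]
      by (simp add: power2_eq_square algebra_simps)
    also have "\<dots> \<longleftrightarrow> \<beta> \<le> Re w"
      using \<gamma>_pos by simp
    finally show ?thesis .
  qed
  show ?thesis
  proof (rule set_eqI)
    fix x
    show "x \<in> insert None (Some ` {w. \<beta> \<le> Re w})
      \<longleftrightarrow> x \<in> {w. chordal_hat (Some (of_real \<gamma>)) w \<le> 2 / sqrt (1 + \<gamma>\<^sup>2)}"
      using finite_points by (cases x) (auto simp: chordal_hat_def emb_hat_def)
  qed
qed

lemma chordal_disc_has_finite_point:
  assumes "r > 0"
  obtains w where "chordal_hat c (Some w) \<le> r"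
proof (cases c)
  case None
  define x where "x = 2 / r"
  have x_pos: "x > 0"
    using assms by (simp add: x_def)
  have "x \<le> sqrt (1 + x\<^sup>2)"
    by (rule real_le_rsqrt) simp
  then have "2 / sqrt (1 + x\<^sup>2) \<le> 2 / x"
    using x_pos by (intro divide_left_mono) (auto intro!: mult_pos_pos add_pos_nonneg)
  also have "\<dots> = r"
    using assms by (simp add: x_def)
  finally show ?thesis
    using None that[of "of_real x"] by (simp add: chordal_hat_def emb_hat_def)
next
  case (Some z)
  then show ?thesis
    using assms that[of z] by (simp add: chordal_hat_def emb_hat_def)
qed

lemma limit_disc_type_iff_bdd_above:
  assumes "\<forall>k\<ge>1. fst (h k) > 0"
  shows "limit_disc_type h \<longleftrightarrow> bdd_above ((\<lambda>n. Re (comp_shift h n)) ` {1..})"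
proof -
  define I where "I = (\<Inter>n\<in>{1..}. comp_upto (\<lambda>k. aff_hat (h k)) n ` Kbar)"
  have I_eq: "I = insert None (Some ` {w. \<forall>n\<ge>1. Re (comp_shift h n) \<le> Re w})"
  proof (rule set_eqI)
    fix x
    show "x \<in> I \<longleftrightarrow> x \<in> insert None (Some ` {w. \<forall>n\<ge>1. Re (comp_shift h n) \<le> Re w})"
      unfolding I_def comp_upto_aff_hat aff_hat_image_Kbar[OF comp_scale_pos[OF assms]]
      by (cases x) auto
  qed
  show ?thesis
  proof
    assume "limit_disc_type h"
    then obtain c r where "r > 0" and I_disc: "I = {w. chordal_hat c w \<le> r}"
      unfolding limit_disc_type_def I_def by blast
    then obtain w where "Some w \<in> I"
      using chordal_disc_has_finite_point by blast
    then have "\<forall>n\<ge>1. Re (comp_shift h n) \<le> Re w"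
      using I_eq by auto
    then show "bdd_above ((\<lambda>n. Re (comp_shift h n)) ` {1..})"
      by (intro bdd_aboveI2[of _ _ "Re w"]) auto
  next
    assume bdd: "bdd_above ((\<lambda>n. Re (comp_shift h n)) ` {1..})"
    define \<beta> where "\<beta> = (SUP n\<in>{1..}. Re (comp_shift h n))"
    have "{w. \<forall>n\<ge>1. Re (comp_shift h n) \<le> Re w} = {w. \<beta> \<le> Re w}"
      unfolding \<beta>_def using cSUP_le_iff[OF _ bdd] by auto
    then have "I = insert None (Some ` {w. \<beta> \<le> Re w})"
      using I_eq by simp
    also note halfplane_eq_chordal_disc[of \<beta>]
    finally show "limit_disc_type h"
      unfolding limit_disc_type_def I_def by (intro exI conjI[rotated]) (auto simp: add_pos_nonneg)
  qed
qed

lemma Re_comp_shift_ge: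
  assumes "\<forall>k\<ge>1. fst (h k) > 0" and "\<forall>k\<ge>1. m \<le> Re (snd (h k))"
  shows "m * (\<Sum>j<n. comp_scale h j) \<le> Re (comp_shift h n)"
  unfolding comp_shift_def Re_sum sum_distrib_left
  using comp_scale_pos[OF assms(1)] assms(2)
  by (intro sum_mono) (simp add: mult.commute mult_left_mono less_imp_le)

lemma norm_comp_shift_le:
  assumes "\<forall>k\<ge>1. fst (h k) > 0" and "\<forall>k\<ge>1. cmod (snd (h k)) \<le> M"
  shows "cmod (comp_shift h n) \<le> M * (\<Sum>j<n. comp_scale h j)"
proof -
  have "cmod (comp_shift h n) \<le> (\<Sum>j<n. cmod (of_real (comp_scale h j) * snd (h (Suc j))))"
    unfolding comp_shift_def by (rule norm_sum)
  also have "\<dots> \<le> (\<Sum>j<n. M * comp_scale h j)"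
    using comp_scale_pos[OF assms(1)] assms(2)
    by (intro sum_mono) (simp add: norm_mult mult.commute mult_left_mono less_imp_le)
  finally show ?thesis
    by (simp add: sum_distrib_left)
qed

lemma summable_comp_scale_if_bdd_above:
  assumes "\<forall>k\<ge>1. fst (h k) > 0" and "m > 0" and "\<forall>k\<ge>1. m \<le> Re (snd (h k))"
    and "bdd_above ((\<lambda>n. Re (comp_shift h n)) ` {1..})"
  shows "summable (comp_scale h)"
proof -
  obtain C where C: "\<forall>n\<ge>1. Re (comp_shift h n) \<le> C"
    using assms(4) by (auto simp: bdd_above_def)
  show ?thesis
  proof (rule bounded_imp_summable)
    show "0 \<le> comp_scale h n" for n
      using comp_scale_pos[OF assms(1)] less_imp_le by blast
    show "(\<Sum>k\<le>n. comp_scale h k) \<le> C / m" for n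
      using Re_comp_shift_ge[OF assms(1,3), of "Suc n"] C[rule_format, of "Suc n"] assms(2)
      by (simp add: lessThan_Suc_atMost field_simps)
  qed
qed

lemma comp_scale_sum_le_suminf:
  assumes "\<forall>k\<ge>1. fst (h k) > 0" and "summable (comp_scale h)" and "finite J"
  shows "(\<Sum>j\<in>J. comp_scale h j) \<le> suminf (comp_scale h)"
  using comp_scale_pos[OF assms(1)] by (intro sum_le_suminf assms(2,3)) (auto intro: less_imp_le)

lemma norm_comp_shift_le_suminf:
  assumes "\<forall>k\<ge>1. fst (h k) > 0" and "\<forall>k\<ge>1. cmod (snd (h k)) \<le> M"
    and "summable (comp_scale h)"
  shows "cmod (comp_shift h n) \<le> M * suminf (comp_scale h)"
proof -
  have "M \<ge> 0"
    using assms(2) norm_ge_zero order_trans by blast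
  have "cmod (comp_shift h n) \<le> M * (\<Sum>j<n. comp_scale h j)"
    by (rule norm_comp_shift_le[OF assms(1,2)])
  also have "\<dots> \<le> M * suminf (comp_scale h)"
    using comp_scale_sum_le_suminf[OF assms(1,3)] \<open>M \<ge> 0\<close> by (simp add: mult_left_mono)
  finally show ?thesis .
qed

lemma limit_disc_type_iff_summable:
  assumes "\<forall>k\<ge>1. fst (h k) > 0"
    and "m > 0" and "\<forall>k\<ge>1. m \<le> Re (snd (h k))" and "\<forall>k\<ge>1. cmod (snd (h k)) \<le> M"
  shows "limit_disc_type h \<longleftrightarrow> summable (comp_scale h)"
proof
  assume "limit_disc_type h"
  then show "summable (comp_scale h)"
    using limit_disc_type_iff_bdd_above[OF assms(1)] summable_comp_scale_if_bdd_above[OF assms(1-3)]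
    by blast
next
  assume "summable (comp_scale h)"
  then have "Re (comp_shift h n) \<le> M * suminf (comp_scale h)" for n
    using norm_comp_shift_le_suminf[OF assms(1,4)] complex_Re_le_cmod order_trans by blast
  then have "bdd_above ((\<lambda>n. Re (comp_shift h n)) ` {1..})"
    by (meson bdd_aboveI2)
  then show "limit_disc_type h"
    using limit_disc_type_iff_bdd_above[OF assms(1)] by blast
qed

lemma bounded_points_not_tendsto_infinity:
  assumes "\<And>n. cmod (z n) \<le> R" and "\<And>n. \<bar>t n\<bar> \<le> T"
  shows "\<not> (\<lambda>n. chordal (Some (z n, t n)) None) \<longlonglongrightarrow> 0"
proof
  define \<delta> where "\<delta> = 2 / sqrt (1 + R\<^sup>2 + T\<^sup>2)"
  have lower: "\<delta> \<le> chordal (Some (z n, t n)) None" for n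
  proof -
    have "(cmod (z n))\<^sup>2 \<le> R\<^sup>2" and "(t n)\<^sup>2 \<le> T\<^sup>2"
      using assms[of n] abs_le_square_iff[of "cmod (z n)" R] abs_le_square_iff[of "t n" T] by auto
    then have "sqrt (1 + (cmod (z n))\<^sup>2 + (t n)\<^sup>2) \<le> sqrt (1 + R\<^sup>2 + T\<^sup>2)"
      by simp
    moreover have "0 < sqrt (1 + (cmod (z n))\<^sup>2 + (t n)\<^sup>2)"
      by (intro real_sqrt_gt_zero add_pos_nonneg) auto
    ultimately show ?thesis
      unfolding \<delta>_def by (simp add: divide_left_mono)
  qed
  assume "(\<lambda>n. chordal (Some (z n, t n)) None) \<longlonglongrightarrow> 0"
  then have "\<delta> \<le> 0"
    using lower by (intro LIMSEQ_le_const) auto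
  moreover have "\<delta> > 0"
    unfolding \<delta>_def by (intro divide_pos_pos real_sqrt_gt_zero add_pos_nonneg) auto
  ultimately show False
    by simp
qed

lemma not_converges_ideally_infinity:
  assumes "\<forall>k\<ge>1. fst (h k) > 0" and "\<forall>k\<ge>1. cmod (snd (h k)) \<le> M"
    and "summable (comp_scale h)"
  shows "\<not> converges_ideally h None"
proof -
  have "\<bar>comp_scale h n\<bar> \<le> suminf (comp_scale h)" for n
    using comp_scale_sum_le_suminf[OF assms(1,3), of "{n}"] comp_scale_pos[OF assms(1), of n]
    by simp
  then show ?thesis
    unfolding converges_ideally_def comp_upto_poincare
    using bounded_points_not_tendsto_infinity[of "comp_shift h" "M * suminf (comp_scale h)"
        "\<lambda>n. \<bar>comp_scale h n\<bar>" "suminf (comp_scale h)"]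
      norm_comp_shift_le_suminf[OF assms]
    by (simp add: poincare_def emb_hat_def)
qed

lemma finite_set_pos_lower_bound:
  assumes "finite A" and "\<forall>x\<in>A. f x > (0::real)"
  obtains m where "m > 0" and "\<forall>x\<in>A. m \<le> f x"
proof (cases "A = {}")
  case True
  then show ?thesis
    using that[of 1] by simp
next
  case False
  then show ?thesis
    using assms that[of "Min (f ` A)"] by simp
qed

theorem lemma3p1:
  fixes S :: "(real \<times> complex) set" and h :: "nat \<Rightarrow> real \<times> complex"
  assumes "finite S"
    and "\<forall>p\<in>S. fst p > 0 \<and> Re (snd p) > 0"
    and "\<forall>n\<ge>1. h n \<in> S"
  shows "(limit_disc_type h \<longleftrightarrow> summable (\<lambda>n. \<Prod>k=1..Suc n. fst (h k)))
         \<and> (\<forall>q. limit_disc_type h \<and> converges_ideally h q \<longrightarrow> q \<noteq> None)"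
proof -
  have pos: "\<forall>k\<ge>1. fst (h k) > 0"
    using assms(2,3) by blast
  obtain m where "m > 0" and "\<forall>p\<in>S. m \<le> Re (snd p)"
    using finite_set_pos_lower_bound[OF assms(1), of "\<lambda>p. Re (snd p)"] assms(2) by blast
  then have lower: "\<forall>k\<ge>1. m \<le> Re (snd (h k))"
    using assms(3) by blast
  obtain M where "\<forall>p\<in>S. cmod (snd p) \<le> M"
    using bdd_above_finite[OF finite_imageI[OF assms(1), of "\<lambda>p. cmod (snd p)"]]
    by (auto simp: bdd_above_def)
  then have upper: "\<forall>k\<ge>1. cmod (snd (h k)) \<le> M"
    using assms(3) by blast
  have "summable (\<lambda>n. \<Prod>k=1..Suc n. fst (h k)) \<longleftrightarrow> summable (comp_scale h)"
    unfolding comp_scale_def by (rule summable_Suc_iff)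
  then show ?thesis
    using limit_disc_type_iff_summable[OF pos \<open>m > 0\<close> lower upper]
      not_converges_ideally_infinity[OF pos upper]
    by metis
qed

end
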